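(* Let $f\in C^1[0,1]$ with $f(0)=0$, $h:=f'$, and let $q$ satisfy condition (q). If $$c>\sup_{\varphi\in(0,1]}\frac{f(\varphi)}{\varphi}+2\sqrt{\sup_{\varphi\in(0,1]}\frac{q(\varphi)}{\varphi}},$$ then there exists $z\in C[0,1]\cap C^1(0,1)$ with $\dot z(\varphi)=h(\varphi)-c-q(\varphi)/z(\varphi)$ and $z(\varphi)<0$ for $\varphi\in(0,1)$, and $z(0)=z(1)=0$.
   Context: Condition (q): $q\in C[0,1]$, $q>0$ on $(0,1)$, $q(0)=q(1)=0$, and $\limsup_{\varphi\to0^+}q(\varphi)/\varphi<+\infty$. *)

theory Defs
  imports "HOL-Analysis.Analysis" "HOL-Library.Extended_Real"
begin

definition cond_q :: "(real \<Rightarrow> real) \<Rightarrow> bool" where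
  "cond_q q \<longleftrightarrow> continuous_on {0..1} q \<and> (\<forall>x\<in>{0<..<1}. q x > 0) \<and> q 0 = 0 \<and> q 1 = 0
     \<and> Limsup (at_right 0) (\<lambda>x. ereal (q x / x)) < \<infinity>"

end

theory Submission
  imports Defs
begin

text \<open>With \<open>z = - y\<close> one looks for \<open>y > 0\<close> on \<open>(0,1)\<close> with \<open>y' = c - h - q / y\<close> and
  \<open>y 0 = y 1 = 0\<close>. For small \<open>a, \<epsilon> > 0\<close>, the equation with \<open>q / y\<close> replaced by
  \<open>q / max y \<delta>\<close> has a solution on \<open>[0,1]\<close> with \<open>y 1 = \<epsilon>\<close>, the least supersolution of a
  monotone integral operator, and it stays above \<open>\<delta>\<close> on \<open>[a,1]\<close> because \<open>y' < 0\<close> wherever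
  \<open>y \<le> \<delta> < q / C\<close>. Solutions of the true equation are ordered by their end values, so letting
  \<open>a, \<epsilon> \<rightarrow> 0\<close> they decrease to a positive limit, and monotone convergence carries the integral
  form of the equation over to it.

  At \<open>0\<close> the speed condition enters. With \<open>k = c - sup f/x\<close> and \<open>B = sup q/x\<close>, the function
  \<open>y - (c x - f x)\<close> is nonincreasing. If \<open>y > k x / 2\<close> near \<open>0\<close>, then \<open>q / y \<le> 2 B / k\<close> there
  and integrating gives \<open>y \<ge> (k - 2 B / k) x\<close>, a steeper line since \<open>k\<^sup>2 > 4 B\<close>; so
  \<open>y \<le> k x / 2\<close> at points arbitrarily close to \<open>0\<close>, and monotonicity yields
  \<open>0 \<le> y \<le> c x - f x \<rightarrow> 0\<close>.\<close>

lemma increment_le_of_deriv_le: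
  fixes f f' :: "real \<Rightarrow> real"
  assumes "a \<le> b" and "continuous_on {a..b} f"
    and "\<And>x. x \<in> {a<..<b} \<Longrightarrow> (f has_real_derivative f' x) (at x)"
    and "\<And>x. x \<in> {a<..<b} \<Longrightarrow> f' x \<le> K"
  shows "f b \<le> f a + K * (b - a)"
proof (cases "a = b")
  case False
  then have "a < b" using assms(1) by simp
  then obtain z where z: "a < z" "z < b" "f b - f a = f' z * (b - a)"
    using mvt[OF _ assms(2), of "\<lambda>x t. f' x * t"] assms(3)
    by (metis greaterThanLessThan_iff has_field_derivative_imp_has_derivative)
  have "f' z * (b - a) \<le> K * (b - a)"
    using assms(4)[of z] z \<open>a < b\<close> by (intro mult_right_mono) auto
  then show ?thesis using z(3) by simp
qed simp

text \<open>A backward Gronwall estimate: \<open>exp (- L x) (u x + M / L)\<close> is nonincreasing.\<close>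
lemma nonneg_of_backward_deriv_le:
  fixes u u' :: "real \<Rightarrow> real"
  assumes "a \<le> b" and "continuous_on {a..b} u"
    and "\<And>x. x \<in> {a<..<b} \<Longrightarrow> (u has_real_derivative u' x) (at x)"
    and "\<And>x. x \<in> {a<..<b} \<Longrightarrow> u' x \<le> L * u x + M"
    and "L > 0" and "M \<ge> 0" and "exp (L * (b - a)) * M / L \<le> u b"
  shows "0 \<le> u a"
proof -
  define E where "E x = exp (- L * x) * (u x + M / L)" for x
  have "E b \<le> E a + 0 * (b - a)"
  proof (rule increment_le_of_deriv_le[OF assms(1)])
    show "continuous_on {a..b} E" unfolding E_def by (intro continuous_intros assms(2))
    show "(E has_real_derivative exp (- L * x) * (u' x - L * u x - M)) (at x)"
      if "x \<in> {a<..<b}" for x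
      unfolding E_def using assms(3)[OF that] \<open>L > 0\<close>
      by (auto intro!: derivative_eq_intros simp: algebra_simps)
    show "exp (- L * x) * (u' x - L * u x - M) \<le> 0" if "x \<in> {a<..<b}" for x
      using assms(4)[OF that] by (simp add: mult_nonneg_nonpos)
  qed
  moreover have "exp (- L * a) * (M / L) \<le> E b"
  proof -
    have "exp (- L * a) * (M / L) = exp (- L * b) * (exp (L * (b - a)) * M / L)"
      by (simp add: mult_exp_exp algebra_simps)
    also have "\<dots> \<le> E b"
      unfolding E_def using assms(5-7) by (intro mult_left_mono) (auto simp: add_increasing2)
    finally show ?thesis .
  qed
  ultimately have "exp (- L * a) * (M / L) \<le> exp (- L * a) * (u a + M / L)"
    by (simp add: E_def)
  then have "M / L \<le> u a + M / L" by (rule mult_left_le_imp_le) simp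
  then show ?thesis by simp
qed

section \<open>Backward problems with a one-sided Lipschitz right-hand side\<close>

locale backward_problem =
  fixes G :: "real \<Rightarrow> real \<Rightarrow> real" and L M \<epsilon> :: real
  assumes G_continuous: "\<And>y. continuous_on {0..1} y \<Longrightarrow> continuous_on {0..1} (\<lambda>s. G s (y s))"
    and G_lipschitz_above: "\<And>s v w. s \<in> {0..1} \<Longrightarrow> v \<le> w \<Longrightarrow> G s w - G s v \<le> L * (w - v)"
    and G_bounded: "\<And>s v. s \<in> {0..1} \<Longrightarrow> \<bar>G s v\<bar> \<le> M"
    and L_pos: "L > 0"
begin

text \<open>\<open>picard y\<close> solves \<open>w' = L w + G s (y s) - L (y s)\<close>, \<open>w 1 = \<epsilon>\<close> by variation of constants.
  Subtracting \<open>L v\<close> makes \<open>G s v - L v\<close> antitone in \<open>v\<close>, so \<open>picard\<close> is monotone, and its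
  fixed points solve \<open>y' = G s y\<close>.\<close>

definition shifted :: "real \<Rightarrow> real \<Rightarrow> real" where
  "shifted s v = G s v - L * v"

definition picard :: "(real \<Rightarrow> real) \<Rightarrow> real \<Rightarrow> real" where
  "picard y \<phi> = exp (L * \<phi>) *
     (exp (- L) * \<epsilon> - integral {\<phi>..1} (\<lambda>s. exp (- L * s) * shifted s (y s)))"

text \<open>\<open>radius\<close> and \<open>lip\<close> are chosen so that \<open>picard\<close> maps \<open>lattice\<close> into itself.\<close>

definition radius :: real where
  "radius = exp L * M / L"

definition lip :: real where
  "lip = M + 2 * L * radius"

definition lattice :: "(real \<Rightarrow> real) set" where
  "lattice = {y. (\<forall>\<phi>\<in>{0..1}. \<bar>y \<phi> - \<epsilon>\<bar> \<le> radius) \<and> lip-lipschitz_on {0..1} y}"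

lemma M_nonneg: "M \<ge> 0"
  using G_bounded[of 0 0] by auto

lemma radius_nonneg: "radius \<ge> 0"
  using M_nonneg L_pos by (simp add: radius_def)

lemma lip_nonneg: "lip \<ge> 0"
  using M_nonneg radius_nonneg L_pos by (simp add: lip_def)

lemma shifted_antimono: "s \<in> {0..1} \<Longrightarrow> v \<le> w \<Longrightarrow> shifted s w \<le> shifted s v"
  using G_lipschitz_above[of s v w] by (simp add: shifted_def algebra_simps)

lemma shifted_continuous:
  "continuous_on {0..1} y \<Longrightarrow> continuous_on {0..1} (\<lambda>s. exp (- L * s) * shifted s (y s))"
  unfolding shifted_def by (intro continuous_intros G_continuous)

lemma picard_has_derivative:
  assumes y: "continuous_on {0..1} y" and \<phi>: "\<phi> \<in> {0..1}"
  shows "(picard y has_real_derivative L * picard y \<phi> + shifted \<phi> (y \<phi>)) (at \<phi> within {0..1})"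
proof -
  have "((\<lambda>x. integral {x..1} (\<lambda>s. exp (- L * s) * shifted s (y s))) has_real_derivative
      - (exp (- L * \<phi>) * shifted \<phi> (y \<phi>))) (at \<phi> within {0..1})"
    by (rule integral_has_real_derivative'[OF shifted_continuous[OF y] \<phi>])
  then have "(picard y has_real_derivative exp (L * \<phi>) * L *
        (exp (- L) * \<epsilon> - integral {\<phi>..1} (\<lambda>s. exp (- L * s) * shifted s (y s)))
      + exp (L * \<phi>) * (exp (- L * \<phi>) * shifted \<phi> (y \<phi>))) (at \<phi> within {0..1})"
    unfolding picard_def[abs_def] by (auto intro!: derivative_eq_intros)
  moreover have "L * picard y \<phi> + shifted \<phi> (y \<phi>) = exp (L * \<phi>) * L *
        (exp (- L) * \<epsilon> - integral {\<phi>..1} (\<lambda>s. exp (- L * s) * shifted s (y s)))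
      + exp (L * \<phi>) * (exp (- L * \<phi>) * shifted \<phi> (y \<phi>))"
    by (simp add: picard_def exp_minus field_simps)
  ultimately show ?thesis by simp
qed

lemma picard_continuous: "continuous_on {0..1} y \<Longrightarrow> continuous_on {0..1} (picard y)"
  by (rule DERIV_continuous_on[OF picard_has_derivative])

lemma picard_has_derivative_at:
  "continuous_on {0..1} y \<Longrightarrow> \<phi> \<in> {0<..<1} \<Longrightarrow>
    (picard y has_real_derivative L * picard y \<phi> + shifted \<phi> (y \<phi>)) (at \<phi>)"
  using picard_has_derivative[of y \<phi>] by (simp add: at_within_Icc_at)

lemma picard_at_1: "picard y 1 = \<epsilon>"
  by (simp add: picard_def exp_add[symmetric])

lemma picard_mono:
  assumes "continuous_on {0..1} y" "continuous_on {0..1} w"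
    and "\<And>s. s \<in> {0..1} \<Longrightarrow> y s \<le> w s" and \<phi>: "\<phi> \<in> {0..1}"
  shows "picard y \<phi> \<le> picard w \<phi>"
proof -
  have sub: "{\<phi>..1} \<subseteq> {0..1}" using \<phi> by auto
  have "integral {\<phi>..1} (\<lambda>s. exp (- L * s) * shifted s (w s))
      \<le> integral {\<phi>..1} (\<lambda>s. exp (- L * s) * shifted s (y s))"
    using assms sub shifted_antimono
    by (intro integral_le integrable_continuous_interval continuous_on_subset[OF shifted_continuous])
      auto
  then show ?thesis unfolding picard_def by (intro mult_left_mono) auto
qed

lemma lattice_near_end_value: "y \<in> lattice \<Longrightarrow> \<phi> \<in> {0..1} \<Longrightarrow> \<bar>y \<phi> - \<epsilon>\<bar> \<le> radius"
  unfolding lattice_def by auto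

lemma lattice_continuous: "y \<in> lattice \<Longrightarrow> continuous_on {0..1} y"
  unfolding lattice_def by (auto intro: lipschitz_on_continuous_on)

lemma picard_near_end_value:
  assumes y: "y \<in> lattice" and \<phi>: "\<phi> \<in> {0..1}"
  shows "\<bar>picard y \<phi> - \<epsilon>\<bar> \<le> radius"
proof -
  have cy: "continuous_on {0..1} y" by (rule lattice_continuous[OF y])
  note y_near = lattice_near_end_value[OF y]
  have cont: "continuous_on {\<phi>..1} (picard y)"
    using \<phi> by (intro continuous_on_subset[OF picard_continuous[OF cy]]) auto
  have deriv: "(picard y has_real_derivative L * picard y x + shifted x (y x)) (at x)"
    if "x \<in> {\<phi><..<1}" for x
    using picard_has_derivative_at[OF cy] that \<phi> by auto
  have end_bound: "exp (L * (1 - \<phi>)) * M / L \<le> radius"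
    unfolding radius_def using \<phi> L_pos M_nonneg
    by (intro divide_right_mono mult_right_mono) auto
  have "0 \<le> \<epsilon> + radius - picard y \<phi>"
  proof (rule nonneg_of_backward_deriv_le[OF _ _ _ _ L_pos M_nonneg, where b = 1
        and u = "\<lambda>x. \<epsilon> + radius - picard y x" and u' = "\<lambda>x. - (L * picard y x + shifted x (y x))"])
    show "- (L * picard y x + shifted x (y x)) \<le> L * (\<epsilon> + radius - picard y x) + M"
      if "x \<in> {\<phi><..<1}" for x
      using y_near[of x] G_bounded[of x "y x"] mult_left_mono[of "y x" "\<epsilon> + radius" L] that \<phi> L_pos
      by (auto simp: shifted_def abs_le_iff algebra_simps)
  qed (use \<phi> cont end_bound picard_at_1 in \<open>auto intro!: continuous_on_diff continuous_on_const derivative_eq_intros deriv\<close>)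
  moreover have "0 \<le> picard y \<phi> - (\<epsilon> - radius)"
  proof (rule nonneg_of_backward_deriv_le[OF _ _ _ _ L_pos M_nonneg, where b = 1
        and u = "\<lambda>x. picard y x - (\<epsilon> - radius)" and u' = "\<lambda>x. L * picard y x + shifted x (y x)"])
    show "L * picard y x + shifted x (y x) \<le> L * (picard y x - (\<epsilon> - radius)) + M"
      if "x \<in> {\<phi><..<1}" for x
      using y_near[of x] G_bounded[of x "y x"] mult_left_mono[of "\<epsilon> - radius" "y x" L] that \<phi> L_pos
      by (auto simp: shifted_def abs_le_iff algebra_simps)
  qed (use \<phi> cont end_bound picard_at_1 in \<open>auto intro!: continuous_on_diff continuous_on_const derivative_eq_intros deriv\<close>)
  ultimately show ?thesis by (simp add: abs_le_iff)
qed

lemma picard_lipschitz: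
  assumes y: "y \<in> lattice"
  shows "lip-lipschitz_on {0..1} (picard y)"
proof (rule bounded_derivative_imp_lipschitz[OF _ convex_real_interval(5) _ lip_nonneg])
  have cy: "continuous_on {0..1} y" by (rule lattice_continuous[OF y])
  show "(picard y has_derivative (*) (L * picard y x + shifted x (y x))) (at x within {0..1})"
    if "x \<in> {0..1}" for x
    using picard_has_derivative[OF cy that] by (simp add: has_field_derivative_def)
  show "onorm ((*) (L * picard y x + shifted x (y x))) \<le> lip" if x: "x \<in> {0..1}" for x
  proof (rule onorm_le)
    have "\<bar>picard y x - y x\<bar> \<le> 2 * radius"
      using picard_near_end_value[OF y x] lattice_near_end_value[OF y x] by (simp add: abs_le_iff)
    then have "\<bar>L * (picard y x - y x)\<bar> \<le> 2 * L * radius"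
      using L_pos mult_left_mono[of _ _ L] by (simp add: abs_mult)
    moreover have "L * picard y x + shifted x (y x) = G x (y x) + L * (picard y x - y x)"
      by (simp add: shifted_def algebra_simps)
    ultimately have "\<bar>L * picard y x + shifted x (y x)\<bar> \<le> lip"
      using G_bounded[OF x, of "y x"] abs_triangle_ineq[of "G x (y x)" "L * (picard y x - y x)"]
      unfolding lip_def by linarith
    then show "norm ((L * picard y x + shifted x (y x)) * t) \<le> lip * norm t" for t
      by (simp add: abs_mult mult_right_mono)
  qed
qed

lemma picard_in_lattice: "y \<in> lattice \<Longrightarrow> picard y \<in> lattice"
  using picard_near_end_value picard_lipschitz unfolding lattice_def by blast

text \<open>The pointwise infimum of the supersolutions is again in the lattice, because its members
  are equi-Lipschitz; monotonicity of \<open>picard\<close> then makes it a fixed point.\<close>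

definition supersolutions :: "(real \<Rightarrow> real) set" where
  "supersolutions = {y \<in> lattice. \<forall>\<phi>\<in>{0..1}. picard y \<phi> \<le> y \<phi>}"

definition least_supersolution :: "real \<Rightarrow> real" where
  "least_supersolution \<phi> = Inf {y \<phi> | y. y \<in> supersolutions}"

lemma constant_supersolution: "(\<lambda>_. \<epsilon> + radius) \<in> supersolutions"
proof -
  have const: "(\<lambda>_. \<epsilon> + radius) \<in> lattice"
    unfolding lattice_def using radius_nonneg lip_nonneg by (auto intro: lipschitz_onI)
  have "picard (\<lambda>_. \<epsilon> + radius) \<phi> \<le> \<epsilon> + radius" if "\<phi> \<in> {0..1}" for \<phi>
    using picard_near_end_value[OF const that] by (simp add: abs_le_iff)
  then show ?thesis unfolding supersolutions_def using const by auto
qed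

lemma supersolution_values_bdd_below: "\<phi> \<in> {0..1} \<Longrightarrow> bdd_below {y \<phi> | y. y \<in> supersolutions}"
  unfolding bdd_below_def supersolutions_def
  by (intro exI[of _ "\<epsilon> - radius"]) (force simp: abs_le_iff dest: lattice_near_end_value)

lemma least_supersolution_le: "y \<in> supersolutions \<Longrightarrow> \<phi> \<in> {0..1} \<Longrightarrow> least_supersolution \<phi> \<le> y \<phi>"
  unfolding least_supersolution_def
  by (rule cInf_lower[OF _ supersolution_values_bdd_below]) auto

lemma le_least_supersolution:
  assumes "\<And>y. y \<in> supersolutions \<Longrightarrow> v \<le> y \<phi>"
  shows "v \<le> least_supersolution \<phi>"
  unfolding least_supersolution_def
  using constant_supersolution assms by (intro cInf_greatest) auto

lemma least_supersolution_in_lattice: "least_supersolution \<in> lattice"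
proof -
  have lower: "least_supersolution x - lip * dist x z \<le> least_supersolution z"
    if x: "x \<in> {0..1}" and z: "z \<in> {0..1}" for x z
  proof (rule le_least_supersolution)
    fix y assume y: "y \<in> supersolutions"
    have "dist (y x) (y z) \<le> lip * dist x z"
      using y x z unfolding supersolutions_def lattice_def by (auto intro: lipschitz_onD)
    then show "least_supersolution x - lip * dist x z \<le> y z"
      using least_supersolution_le[OF y x] by (simp add: dist_real_def abs_le_iff)
  qed
  have "lip-lipschitz_on {0..1} least_supersolution"
  proof (rule lipschitz_onI[OF _ lip_nonneg])
    fix x z :: real assume "x \<in> {0..1}" "z \<in> {0..1}"
    then show "dist (least_supersolution x) (least_supersolution z) \<le> lip * dist x z"
      using lower by (fastforce simp: dist_real_def abs_minus_commute abs_le_iff)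
  qed
  moreover have "\<bar>least_supersolution \<phi> - \<epsilon>\<bar> \<le> radius" if \<phi>: "\<phi> \<in> {0..1}" for \<phi>
  proof -
    have "\<epsilon> - radius \<le> least_supersolution \<phi>"
      by (rule le_least_supersolution)
        (use \<phi> in \<open>force simp: supersolutions_def abs_le_iff dest: lattice_near_end_value\<close>)
    then show ?thesis
      using least_supersolution_le[OF constant_supersolution \<phi>] by (simp add: abs_le_iff)
  qed
  ultimately show ?thesis unfolding lattice_def by auto
qed

lemma picard_least_supersolution_le:
  assumes \<phi>: "\<phi> \<in> {0..1}"
  shows "picard least_supersolution \<phi> \<le> least_supersolution \<phi>"
proof (rule le_least_supersolution)
  fix y assume y: "y \<in> supersolutions"
  then have "picard least_supersolution \<phi> \<le> picard y \<phi>"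
    using least_supersolution_in_lattice least_supersolution_le \<phi>
    by (intro picard_mono lattice_continuous) (auto simp: supersolutions_def)
  also have "\<dots> \<le> y \<phi>" using y \<phi> unfolding supersolutions_def by auto
  finally show "picard least_supersolution \<phi> \<le> y \<phi>" .
qed

lemma picard_least_supersolution: "picard least_supersolution \<phi> = least_supersolution \<phi>"
  if "\<phi> \<in> {0..1}"
proof -
  have cont: "continuous_on {0..1} least_supersolution"
    by (rule lattice_continuous[OF least_supersolution_in_lattice])
  have "picard least_supersolution \<in> supersolutions"
    unfolding supersolutions_def
    using picard_in_lattice picard_mono[OF picard_continuous[OF cont] cont picard_least_supersolution_le]
      picard_least_supersolution_le least_supersolution_in_lattice by auto
  then show ?thesis
    using least_supersolution_le picard_least_supersolution_le that by (simp add: order_antisym)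
qed

theorem backward_solution_exists:
  "\<exists>y. continuous_on {0..1} y \<and> y 1 = \<epsilon> \<and> (\<forall>s\<in>{0<..<1}. (y has_real_derivative G s (y s)) (at s))"
proof (intro exI conjI ballI)
  let ?y = "picard least_supersolution"
  have cont: "continuous_on {0..1} least_supersolution"
    by (rule lattice_continuous[OF least_supersolution_in_lattice])
  show "continuous_on {0..1} ?y" by (rule picard_continuous[OF cont])
  show "?y 1 = \<epsilon>" by (rule picard_at_1)
  fix s :: real assume s: "s \<in> {0<..<1}"
  have "L * ?y s + shifted s (least_supersolution s) = G s (?y s)"
    using picard_least_supersolution[of s] s by (simp add: shifted_def)
  then show "(?y has_real_derivative G s (?y s)) (at s)"
    using picard_has_derivative_at[OF cont s] by simp
qed

end

section \<open>Positive solutions of the equation on \<open>[a,1]\<close>\<close>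

lemma bounded_on_unit_interval:
  fixes g :: "real \<Rightarrow> real"
  assumes "continuous_on {0..1} g"
  obtains B where "B > 0" "\<And>x. x \<in> {0..1} \<Longrightarrow> \<bar>g x\<bar> \<le> B"
proof -
  obtain B where "B > 0" "\<forall>v\<in>g ` {0..1}. norm v \<le> B"
    using compact_imp_bounded[OF compact_continuous_image[OF assms compact_Icc]]
    by (auto simp: bounded_pos)
  then show ?thesis using that by auto
qed

locale riccati =
  fixes h q :: "real \<Rightarrow> real" and c :: real
  assumes h_continuous: "continuous_on {0..1} h"
    and q_continuous: "continuous_on {0..1} q"
    and q_pos: "\<And>x. x \<in> {0<..<1} \<Longrightarrow> q x > 0"
    and q_0: "q 0 = 0" and q_1: "q 1 = 0"
begin

lemma q_nonneg: "x \<in> {0..1} \<Longrightarrow> 0 \<le> q x"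
  using q_pos[of x] q_0 q_1 by (cases "x = 0 \<or> x = 1") (auto simp: less_eq_real_def)

lemma drift_bounded_above: obtains C where "C > 0" "\<And>x. x \<in> {0..1} \<Longrightarrow> c - h x \<le> C"
proof -
  obtain H where "H > 0" "\<And>x. x \<in> {0..1} \<Longrightarrow> \<bar>h x\<bar> \<le> H"
    using bounded_on_unit_interval[OF h_continuous] by blast
  then show ?thesis by (intro that[of "\<bar>c\<bar> + H"]) force+
qed

lemma truncated_solution_exists:
  assumes \<delta>: "\<delta> > 0"
  shows "\<exists>y. continuous_on {0..1} y \<and> y 1 = \<epsilon> \<and>
    (\<forall>s\<in>{0<..<1}. (y has_real_derivative c - h s - q s / max (y s) \<delta>) (at s))"
proof -
  obtain Q where Q: "Q > 0" "\<And>x. x \<in> {0..1} \<Longrightarrow> \<bar>q x\<bar> \<le> Q"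
    using bounded_on_unit_interval[OF q_continuous] by blast
  obtain H where H: "H > 0" "\<And>x. x \<in> {0..1} \<Longrightarrow> \<bar>h x\<bar> \<le> H"
    using bounded_on_unit_interval[OF h_continuous] by blast
  have "backward_problem (\<lambda>s v. c - h s - q s / max v \<delta>) (Q / (\<delta> * \<delta>)) (\<bar>c\<bar> + H + Q / \<delta>)"
  proof
    show "continuous_on {0..1} (\<lambda>s. c - h s - q s / max (y s) \<delta>)" if "continuous_on {0..1} y" for y
      using \<delta> by (intro continuous_intros h_continuous q_continuous that) auto
    show "(c - h s - q s / max w \<delta>) - (c - h s - q s / max v \<delta>) \<le> Q / (\<delta> * \<delta>) * (w - v)"
      if s: "s \<in> {0..1}" and "v \<le> w" for s v w
    proof -
      have "(c - h s - q s / max w \<delta>) - (c - h s - q s / max v \<delta>)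
          = q s * (max w \<delta> - max v \<delta>) / (max v \<delta> * max w \<delta>)"
        using \<delta> by (simp add: field_simps)
      also have "\<dots> \<le> q s * (max w \<delta> - max v \<delta>) / (\<delta> * \<delta>)"
        using q_nonneg[OF s] \<open>v \<le> w\<close> \<delta>
        by (intro divide_left_mono mult_mono mult_nonneg_nonneg) auto
      also have "\<dots> \<le> Q * (w - v) / (\<delta> * \<delta>)"
        using q_nonneg[OF s] Q(2)[OF s] \<open>v \<le> w\<close> \<delta> by (intro divide_right_mono mult_mono) auto
      finally show ?thesis by simp
    qed
    show "\<bar>c - h s - q s / max v \<delta>\<bar> \<le> \<bar>c\<bar> + H + Q / \<delta>" if s: "s \<in> {0..1}" for s v
    proof -
      have "q s / max v \<delta> \<le> Q / \<delta>"
        using q_nonneg[OF s] Q(2)[OF s] \<delta> by (intro frac_le) auto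
      moreover have "0 \<le> q s / max v \<delta>" using q_nonneg[OF s] \<delta> by auto
      ultimately show ?thesis using H(2)[OF s] by (simp add: abs_le_iff) linarith
    qed
    show "Q / (\<delta> * \<delta>) > 0" using Q \<delta> by simp
  qed
  then show ?thesis by (rule backward_problem.backward_solution_exists)
qed

lemma q_margin:
  assumes "0 < a" "b < 1" "C > 0" "\<epsilon> > 0"
  obtains \<delta> where "\<delta> > 0" "\<delta> < \<epsilon> / 2" "\<And>s. s \<in> {a..b} \<Longrightarrow> C * \<delta> < q s"
proof (cases "a \<le> b")
  case True
  obtain s0 where s0: "s0 \<in> {a..b}" "\<And>s. s \<in> {a..b} \<Longrightarrow> q s0 \<le> q s"
    using continuous_attains_inf[of "{a..b}" q] True continuous_on_subset[OF q_continuous, of "{a..b}"] assms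
    by fastforce
  have "q s0 > 0" using q_pos[of s0] s0(1) assms by auto
  show ?thesis
  proof (rule that[of "min (\<epsilon> / 4) (q s0 / (2 * C))"])
    fix s assume "s \<in> {a..b}"
    have "C * min (\<epsilon> / 4) (q s0 / (2 * C)) \<le> C * (q s0 / (2 * C))"
      using assms by (intro mult_left_mono) auto
    also have "\<dots> < q s0" using \<open>q s0 > 0\<close> assms by simp
    also have "\<dots> \<le> q s" by (rule s0(2)[OF \<open>s \<in> {a..b}\<close>])
    finally show "C * min (\<epsilon> / 4) (q s0 / (2 * C)) < q s" .
  qed (use \<open>q s0 > 0\<close> assms in auto)
qed (use assms in \<open>auto intro: that[of "\<epsilon> / 4"]\<close>)

lemma truncated_solution_above_line:
  assumes y: "continuous_on {0..1} y"
      "\<And>s. s \<in> {0<..<1} \<Longrightarrow> (y has_real_derivative c - h s - q s / max (y s) \<delta>) (at s)"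
    and C: "\<And>x. x \<in> {0..1} \<Longrightarrow> c - h x \<le> C"
    and "\<delta> > 0" and t: "t \<in> {0..1}"
  shows "y 1 - C * (1 - t) \<le> y t"
proof -
  have "y 1 \<le> y t + C * (1 - t)"
  proof (rule increment_le_of_deriv_le[where f' = "\<lambda>x. c - h x - q x / max (y x) \<delta>"])
    show "c - h x - q x / max (y x) \<delta> \<le> C" if "x \<in> {t<..<1}" for x
    proof -
      have "0 \<le> q x / max (y x) \<delta>" using q_nonneg[of x] \<open>\<delta> > 0\<close> that t by auto
      then show ?thesis using C[of x] that t by auto
    qed
  qed (use t y in \<open>auto intro: continuous_on_subset\<close>)
  then show ?thesis by simp
qed

text \<open>Where \<open>y \<le> \<delta>\<close> and \<open>q > C \<delta>\<close> the truncated equation forces \<open>y' < 0\<close>, so going left from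
  \<open>y 1 = \<epsilon>\<close> the solution cannot come down to the level \<open>\<delta>\<close>.\<close>
lemma truncated_solution_above_level:
  assumes y: "continuous_on {0..1} y" "y 1 = \<epsilon>"
      "\<And>s. s \<in> {0<..<1} \<Longrightarrow> (y has_real_derivative c - h s - q s / max (y s) \<delta>) (at s)"
    and C: "C > 0" "\<And>x. x \<in> {0..1} \<Longrightarrow> c - h x \<le> C"
    and \<delta>: "\<delta> > 0" "\<delta> < \<epsilon> / 2" "\<And>s. s \<in> {a..1 - \<epsilon> / (2 * C)} \<Longrightarrow> C * \<delta> < q s"
    and a: "0 < a" and s: "s \<in> {a..1}"
  shows "\<delta> \<le> y s"
proof (rule ccontr)
  assume "\<not> \<delta> \<le> y s"
  define S where "S = {s..1} \<inter> y -` {..\<delta>}"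
  have "closed S" unfolding S_def
    by (rule continuous_closed_preimage[OF continuous_on_subset[OF y(1)]]) (use s a in auto)
  moreover have "S \<noteq> {}" "bdd_above S"
    using \<open>\<not> \<delta> \<le> y s\<close> s by (auto simp: S_def intro: bdd_aboveI[of _ 1])
  ultimately have "Sup S \<in> S" by (intro closed_contains_Sup)
  define p where "p = Sup S"
  have p: "s \<le> p" "p \<le> 1" "y p \<le> \<delta>" using \<open>Sup S \<in> S\<close> by (auto simp: S_def p_def)
  have "p < 1 - \<epsilon> / (2 * C)"
    using truncated_solution_above_line[OF y(1,3) C(2) \<delta>(1), of p] y(2) p s a \<delta>(2) C(1)
    by (auto simp: field_simps)
  moreover have "0 < \<epsilon> / (2 * C)" using \<delta>(1,2) C(1) by simp
  ultimately have p01: "p \<in> {0<..<1}" and "C * \<delta> < q p"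
    using p s a by (auto intro!: \<delta>(3))
  then have "C < q p / max (y p) \<delta>"
    using p(3) \<delta>(1) by (simp add: max_def field_simps)
  then have "c - h p - q p / max (y p) \<delta> < 0"
    using C(2)[of p] p01 by auto
  then obtain d where d: "d > 0" "\<And>e. e > 0 \<Longrightarrow> e < d \<Longrightarrow> y (p + e) < y p"
    using DERIV_neg_dec_right[OF y(3)[OF p01]] by blast
  define e where "e = min (d / 2) ((1 - p) / 2)"
  have "e \<le> (1 - p) / 2" unfolding e_def by (rule min.cobounded2)
  then have "e > 0" "e < d" "p + e \<le> 1" using d(1) p01 by (auto simp: e_def)
  then have "p + e \<in> S" using d(2) p by (fastforce simp: S_def)
  then have "p + e \<le> p" unfolding p_def by (rule cSup_upper[OF _ \<open>bdd_above S\<close>])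
  then show False using \<open>e > 0\<close> by simp
qed

definition positive_solution :: "real \<Rightarrow> real \<Rightarrow> (real \<Rightarrow> real) \<Rightarrow> bool" where
  "positive_solution a e y \<longleftrightarrow> continuous_on {a..1} y \<and> y 1 = e \<and> (\<forall>s\<in>{a..1}. y s > 0) \<and>
     (\<forall>s\<in>{a<..<1}. (y has_real_derivative c - h s - q s / y s) (at s))"

lemma positive_solution_exists:
  assumes "0 < \<epsilon>" "0 < a" "a < 1"
  shows "\<exists>y. positive_solution a \<epsilon> y"
proof -
  obtain C where C: "C > 0" "\<And>x. x \<in> {0..1} \<Longrightarrow> c - h x \<le> C"
    using drift_bounded_above by blast
  obtain \<delta> where \<delta>: "\<delta> > 0" "\<delta> < \<epsilon> / 2" "\<And>s. s \<in> {a..1 - \<epsilon> / (2 * C)} \<Longrightarrow> C * \<delta> < q s"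
    using q_margin[of a "1 - \<epsilon> / (2 * C)" C \<epsilon>] assms C(1) by auto
  obtain y where y: "continuous_on {0..1} y" "y 1 = \<epsilon>"
      "\<And>s. s \<in> {0<..<1} \<Longrightarrow> (y has_real_derivative c - h s - q s / max (y s) \<delta>) (at s)"
    using truncated_solution_exists[OF \<delta>(1), of \<epsilon>] by blast
  have above: "\<delta> \<le> y s" if "s \<in> {a..1}" for s
    by (rule truncated_solution_above_level[OF y C \<delta> \<open>0 < a\<close> that])
  have "positive_solution a \<epsilon> y"
    unfolding positive_solution_def
  proof (intro conjI ballI)
    show "continuous_on {a..1} y" using continuous_on_subset[OF y(1)] assms by auto
    show "y s > 0" if "s \<in> {a..1}" for s using above[OF that] \<delta>(1) by simp
    show "(y has_real_derivative c - h s - q s / y s) (at s)" if "s \<in> {a<..<1}" for s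
      using y(3)[of s] above[of s] that assms by (auto simp: max_def)
  qed (use y in auto)
  then show ?thesis by blast
qed

lemma positive_solution_restrict:
  "positive_solution a e y \<Longrightarrow> a \<le> a' \<Longrightarrow> positive_solution a' e y"
  unfolding positive_solution_def by (auto intro: continuous_on_subset)

lemma positive_solution_mono:
  assumes u: "positive_solution a e u" and v: "positive_solution a e' v"
    and "e \<le> e'" and \<phi>: "\<phi> \<in> {a..1}" and "0 < a"
  shows "u \<phi> \<le> v \<phi>"
proof (rule ccontr)
  assume "\<not> u \<phi> \<le> v \<phi>"
  define D where "D x = v x - u x" for x
  have cD: "continuous_on {a..1} D"
    using u v unfolding D_def positive_solution_def by (intro continuous_intros) auto
  define S where "S = {\<phi>..1} \<inter> D -` {0..}"
  have "closed S" unfolding S_def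
    by (rule continuous_closed_preimage[OF continuous_on_subset[OF cD]]) (use \<phi> in auto)
  moreover have "S \<noteq> {}" "bdd_below S"
    using u v \<open>e \<le> e'\<close> \<phi> by (auto simp: S_def D_def positive_solution_def intro: bdd_belowI[of _ \<phi>])
  ultimately have "Inf S \<in> S" by (intro closed_contains_Inf)
  define p where "p = Inf S"
  have p: "\<phi> \<le> p" "p \<le> 1" "D p \<ge> 0" using \<open>Inf S \<in> S\<close> by (auto simp: S_def p_def)
  have below: "v t < u t" if "t \<in> {\<phi>..<p}" for t
  proof (rule ccontr)
    assume "\<not> v t < u t"
    then have "t \<in> S" using that p by (auto simp: S_def D_def)
    then have "p \<le> t" unfolding p_def by (rule cInf_lower[OF _ \<open>bdd_below S\<close>])
    then show False using that by simp
  qed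
  have "D p \<le> D \<phi> + 0 * (p - \<phi>)"
  proof (rule increment_le_of_deriv_le[where f' = "\<lambda>t. q t / u t - q t / v t"])
    show "continuous_on {\<phi>..p} D" using continuous_on_subset[OF cD] \<phi> p by auto
    show "(D has_real_derivative q t / u t - q t / v t) (at t)" if "t \<in> {\<phi><..<p}" for t
      using u v that \<phi> p unfolding D_def[abs_def] positive_solution_def
      by (auto intro!: derivative_eq_intros)
    show "q t / u t - q t / v t \<le> 0" if t: "t \<in> {\<phi><..<p}" for t
    proof -
      have "0 < v t" using v t \<phi> p unfolding positive_solution_def by auto
      then show ?thesis
        using below[of t] q_nonneg[of t] t \<phi> p \<open>0 < a\<close> by (auto intro: divide_left_mono)
    qed
  qed (use p in simp)
  then show False using p(3) \<open>\<not> u \<phi> \<le> v \<phi>\<close> by (simp add: D_def)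
qed

lemma positive_solution_increment_le:
  assumes y: "positive_solution a e y" and C: "\<And>x. x \<in> {0..1} \<Longrightarrow> c - h x \<le> C"
    and "0 \<le> a" "a \<le> s" "s \<le> t" "t \<le> 1"
  shows "y t \<le> y s + C * (t - s)"
proof (rule increment_le_of_deriv_le[where f' = "\<lambda>x. c - h x - q x / y x"])
  show "c - h x - q x / y x \<le> C" if "x \<in> {s<..<t}" for x
  proof -
    have "0 < y x" using y that assms unfolding positive_solution_def by auto
    moreover have "x \<in> {0..1}" using that assms by auto
    ultimately have "0 \<le> q x / y x" using q_nonneg[of x] by auto
    then show ?thesis using C[OF \<open>x \<in> {0..1}\<close>] by linarith
  qed
qed (use y assms in \<open>auto simp: positive_solution_def intro: continuous_on_subset\<close>)

text \<open>If \<open>y s\<close> were tiny, then \<open>y \<le> 2 y s\<close> on an interval of length \<open>y s / C\<close> to the right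
  of \<open>s\<close>, where \<open>q / y\<close> is so large that \<open>y\<close> would become negative.\<close>
lemma positive_solution_lower_bound:
  assumes s: "s \<in> {0<..<1}"
  obtains \<beta> where "\<beta> > 0" "\<And>a e y. positive_solution a e y \<Longrightarrow> 0 < a \<Longrightarrow> a \<le> s \<Longrightarrow> \<beta> \<le> y s"
proof -
  obtain C where C: "C > 0" "\<And>x. x \<in> {0..1} \<Longrightarrow> c - h x \<le> C"
    using drift_bounded_above by blast
  define \<eta> where "\<eta> = (1 - s) / 2"
  have \<eta>: "\<eta> > 0" "s + \<eta> < 1" using s by (auto simp: \<eta>_def field_simps)
  obtain t0 where t0: "t0 \<in> {s..s+\<eta>}" "\<And>t. t \<in> {s..s+\<eta>} \<Longrightarrow> q t0 \<le> q t"
    using continuous_attains_inf[of "{s..s+\<eta>}" q] continuous_on_subset[OF q_continuous, of "{s..s+\<eta>}"] s \<eta>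
    by fastforce
  define m where "m = q t0"
  have m: "m > 0" using q_pos[of t0] t0(1) s \<eta> by (auto simp: m_def)
  show ?thesis
  proof (rule that[of "min (m / (4 * C)) (C * \<eta>)"])
    show "min (m / (4 * C)) (C * \<eta>) > 0" using m C \<eta> by simp
    fix a e y assume y: "positive_solution a e y" and "0 < a" "a \<le> s"
    have y_pos: "0 < y t" if "t \<in> {a..1}" for t using y that by (auto simp: positive_solution_def)
    show "min (m / (4 * C)) (C * \<eta>) \<le> y s"
    proof (rule ccontr)
      assume "\<not> ?thesis"
      then have small: "y s < m / (4 * C)" "y s < C * \<eta>" by auto
      define \<tau> where "\<tau> = y s / C"
      have "0 < y s" using y_pos[of s] \<open>a \<le> s\<close> s by auto
      then have \<tau>: "\<tau> > 0" "\<tau> < \<eta>" "C * \<tau> = y s" using C small(2) by (auto simp: \<tau>_def field_simps)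
      have "y (s + \<tau>) \<le> y s + (C - m / (2 * y s)) * (s + \<tau> - s)"
      proof (rule increment_le_of_deriv_le[where f' = "\<lambda>x. c - h x - q x / y x"])
        show "c - h x - q x / y x \<le> C - m / (2 * y s)" if x: "x \<in> {s<..<s + \<tau>}" for x
        proof -
          have "y x \<le> y s + C * (x - s)"
            by (rule positive_solution_increment_le[OF y C(2)]) (use x \<open>0 < a\<close> \<open>a \<le> s\<close> \<tau> \<eta> in auto)
          also have "\<dots> \<le> 2 * y s" using x \<tau> C(1) mult_left_mono[of "x - s" \<tau> C] by auto
          finally have "m / (2 * y s) \<le> q x / y x"
            using m t0(2)[of x] x \<tau> y_pos[of x] \<open>a \<le> s\<close> \<eta> unfolding m_def by (intro frac_le) auto
          then show ?thesis using C(2)[of x] x \<tau> \<eta> s by auto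
        qed
      qed (use y \<tau> \<eta> s \<open>a \<le> s\<close> in \<open>auto simp: positive_solution_def intro: continuous_on_subset\<close>)
      also have "\<dots> = 2 * y s - m / (2 * C)"
        using C \<open>0 < y s\<close> by (simp add: \<tau>_def field_simps)
      also have "\<dots> < 0" using small(1) C by (simp add: field_simps)
      finally show False using y_pos[of "s + \<tau>"] \<open>a \<le> s\<close> s \<tau> \<eta> by auto
    qed
  qed
qed

section \<open>The decreasing limit of the approximations\<close>

text \<open>By comparison the approximations decrease in \<open>n\<close>, hence converge pointwise.\<close>
definition level :: "nat \<Rightarrow> real" where
  "level n = 1 / (real n + 2)"

definition approx :: "nat \<Rightarrow> real \<Rightarrow> real" where
  "approx n = (SOME y. positive_solution (level n) (level n) y)"

definition limit_solution :: "real \<Rightarrow> real" where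
  "limit_solution \<phi> = lim (\<lambda>n. approx n \<phi>)"

definition tail_integral :: "real \<Rightarrow> real" where
  "tail_integral \<phi> = integral {\<phi>..1} (\<lambda>s. c - h s)"

lemma level_pos: "0 < level n" and level_less_1: "level n < 1"
  by (auto simp: level_def)

lemma level_antimono: "n \<le> m \<Longrightarrow> level m \<le> level n"
  by (auto simp: level_def frac_le)

lemma level_tendsto_0: "level \<longlonglongrightarrow> 0"
  unfolding level_def by real_asymp

lemma level_le:
  assumes "\<phi> \<in> {0<..1}" and "nat \<lceil>1 / \<phi>\<rceil> \<le> n"
  shows "level n \<le> \<phi>"
proof -
  have "1 / \<phi> \<le> real n + 2" using assms(2) by linarith
  then show ?thesis using assms(1) by (auto simp: level_def field_simps)
qed

lemma approx_solution: "positive_solution (level n) (level n) (approx n)"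
  unfolding approx_def using positive_solution_exists[OF level_pos level_pos level_less_1]
  by (rule someI_ex)

lemma approx_pos: "\<phi> \<in> {level n..1} \<Longrightarrow> 0 < approx n \<phi>"
  using approx_solution[of n] unfolding positive_solution_def by auto

lemma approx_antimono: "n \<le> m \<Longrightarrow> \<phi> \<in> {level n..1} \<Longrightarrow> approx m \<phi> \<le> approx n \<phi>"
  by (rule positive_solution_mono[OF positive_solution_restrict[OF approx_solution level_antimono]
        approx_solution level_antimono]) (auto simp: level_pos)

lemma approx_tendsto:
  assumes \<phi>: "\<phi> \<in> {0<..1}"
  shows "(\<lambda>n. approx n \<phi>) \<longlonglongrightarrow> limit_solution \<phi>"
proof -
  define N where "N = nat \<lceil>1 / \<phi>\<rceil>"
  have below: "level (k + N) \<le> \<phi>" for k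
    by (rule level_le[OF \<phi>]) (simp add: N_def)
  have "decseq (\<lambda>k. approx (k + N) \<phi>)"
    unfolding decseq_def using approx_antimono below \<phi> by simp
  moreover have "0 \<le> approx (k + N) \<phi>" for k
    using approx_pos[of \<phi> "k + N"] below[of k] \<phi> by auto
  ultimately obtain l where "(\<lambda>k. approx (k + N) \<phi>) \<longlonglongrightarrow> l"
    by (metis decseq_convergent)
  then have "(\<lambda>n. approx n \<phi>) \<longlonglongrightarrow> l" by (rule LIMSEQ_offset)
  then show ?thesis unfolding limit_solution_def by (simp add: limI)
qed

lemma limit_solution_pos:
  assumes s: "s \<in> {0<..<1}"
  shows "0 < limit_solution s"
proof -
  obtain \<beta> where \<beta>: "\<beta> > 0"
    "\<And>a e y. positive_solution a e y \<Longrightarrow> 0 < a \<Longrightarrow> a \<le> s \<Longrightarrow> \<beta> \<le> y s"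
    using positive_solution_lower_bound[OF s] by blast
  have "\<beta> \<le> limit_solution s"
  proof (rule LIMSEQ_le_const[OF approx_tendsto])
    show "\<exists>N. \<forall>n\<ge>N. \<beta> \<le> approx n s"
      using s by (intro exI[of _ "nat \<lceil>1 / s\<rceil>"] allI impI \<beta>(2)[OF approx_solution level_pos]
          level_le) auto
  qed (use s in auto)
  then show ?thesis using \<beta>(1) by simp
qed

lemma limit_solution_at_1: "limit_solution 1 = 0"
proof -
  have "(\<lambda>n. approx n 1) = level"
    using approx_solution unfolding positive_solution_def by auto
  then show ?thesis using approx_tendsto[of 1] level_tendsto_0 LIMSEQ_unique by auto
qed

lemma limit_solution_nonneg: "x \<in> {0<..1} \<Longrightarrow> 0 \<le> limit_solution x"
  using limit_solution_pos[of x] limit_solution_at_1 by (cases "x = 1") (auto simp: less_eq_real_def)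

lemma approx_has_integral:
  assumes \<phi>: "\<phi> \<in> {level n..1}"
  shows "((\<lambda>s. q s / approx n s) has_integral (tail_integral \<phi> - level n + approx n \<phi>)) {\<phi>..1}"
proof -
  have y: "positive_solution (level n) (level n) (approx n)" by (rule approx_solution)
  have "((\<lambda>s. c - h s - q s / approx n s) has_integral (approx n 1 - approx n \<phi>)) {\<phi>..1}"
  proof (rule fundamental_theorem_of_calculus_interior)
    show "continuous_on {\<phi>..1} (approx n)"
      using y \<phi> unfolding positive_solution_def by (auto intro: continuous_on_subset)
    show "(approx n has_vector_derivative c - h x - q x / approx n x) (at x)" if "x \<in> {\<phi><..<1}" for x
      using y that \<phi> unfolding positive_solution_def
      by (auto simp: has_real_derivative_iff_has_vector_derivative[symmetric])
  qed (use \<phi> in simp)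
  moreover have "((\<lambda>s. c - h s) has_integral tail_integral \<phi>) {\<phi>..1}"
    unfolding tail_integral_def using \<phi> level_pos[of n]
    by (intro integrable_integral integrable_continuous_interval continuous_intros
        continuous_on_subset[OF h_continuous]) auto
  ultimately have "((\<lambda>s. (c - h s) - (c - h s - q s / approx n s)) has_integral
      (tail_integral \<phi> - (approx n 1 - approx n \<phi>))) {\<phi>..1}"
    by (rule has_integral_diff[rotated])
  then show ?thesis using y by (simp add: positive_solution_def algebra_simps)
qed

lemma q_div_approx_tendsto:
  assumes s: "s \<in> {0<..1}"
  shows "(\<lambda>n. q s / approx n s) \<longlonglongrightarrow> q s / limit_solution s"
proof (cases "s = 1")
  case False
  then have "limit_solution s \<noteq> 0" using limit_solution_pos[of s] s by auto
  then show ?thesis by (intro tendsto_divide tendsto_const approx_tendsto[OF s])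
qed (simp add: q_1)

lemma limit_solution_has_integral:
  assumes \<phi>: "\<phi> \<in> {0<..1}"
  shows "((\<lambda>s. q s / limit_solution s) has_integral (tail_integral \<phi> + limit_solution \<phi>)) {\<phi>..1}"
proof -
  define N where "N = nat \<lceil>1 / \<phi>\<rceil>"
  define g where "g k s = q s / approx (k + N) s" for k s
  have below: "level (k + N) \<le> \<phi>" for k by (rule level_le[OF \<phi>]) (simp add: N_def)
  have g_integral: "(g k has_integral (tail_integral \<phi> - level (k + N) + approx (k + N) \<phi>)) {\<phi>..1}" for k
    unfolding g_def by (rule approx_has_integral) (use below[of k] \<phi> in auto)
  have "(\<lambda>s. q s / limit_solution s) integrable_on {\<phi>..1} \<and>
      (\<lambda>k. integral {\<phi>..1} (g k)) \<longlonglongrightarrow> integral {\<phi>..1} (\<lambda>s. q s / limit_solution s)"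
  proof (rule monotone_convergence_increasing)
    show "g k integrable_on {\<phi>..1}" for k using g_integral[of k] by blast
    show "g k s \<le> g (Suc k) s" if s: "s \<in> {\<phi>..1}" for k s
      unfolding g_def using below[of k] below[of "Suc k"] s \<phi> q_nonneg[of s]
      by (intro divide_left_mono approx_antimono mult_pos_pos approx_pos) auto
    show "(\<lambda>k. g k s) \<longlonglongrightarrow> q s / limit_solution s" if "s \<in> {\<phi>..1}" for s
      unfolding g_def using that \<phi>
      by (intro LIMSEQ_ignore_initial_segment[OF q_div_approx_tendsto]) auto
    have "\<bar>integral {\<phi>..1} (g k)\<bar> \<le> \<bar>tail_integral \<phi>\<bar> + 1 + approx N \<phi>" for k
      using integral_unique[OF g_integral[of k]] level_pos[of "k + N"] level_less_1[of "k + N"]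
        approx_pos[of \<phi> "k + N"] approx_antimono[of N "k + N" \<phi>] below[of k] below[of 0] \<phi>
      by (simp add: abs_le_iff) linarith
    then show "bounded (range (\<lambda>k. integral {\<phi>..1} (g k)))"
      unfolding bounded_iff by (intro exI[of _ "\<bar>tail_integral \<phi>\<bar> + 1 + approx N \<phi>"]) auto
  qed
  moreover have "(\<lambda>k. integral {\<phi>..1} (g k)) \<longlonglongrightarrow> tail_integral \<phi> - 0 + limit_solution \<phi>"
    unfolding integral_unique[OF g_integral]
    by (intro tendsto_intros LIMSEQ_ignore_initial_segment[OF level_tendsto_0]
        LIMSEQ_ignore_initial_segment[OF approx_tendsto[OF \<phi>]])
  ultimately show ?thesis using LIMSEQ_unique by fastforce
qed

lemma limit_solution_eq:
  "\<phi> \<in> {0<..1} \<Longrightarrow> limit_solution \<phi> = integral {\<phi>..1} (\<lambda>s. q s / limit_solution s) - tail_integral \<phi>"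
  using integral_unique[OF limit_solution_has_integral] by simp

lemma q_div_limit_solution_integrable:
  "a \<in> {0<..1} \<Longrightarrow> (\<lambda>s. q s / limit_solution s) integrable_on {a..1}"
  using limit_solution_has_integral by blast

lemma tail_integral_continuous: "continuous_on {0..1} tail_integral"
  unfolding tail_integral_def
  by (intro indefinite_integral_continuous_1' integrable_continuous_interval continuous_intros
      h_continuous)

lemma limit_solution_continuous:
  assumes a: "a \<in> {0<..1}"
  shows "continuous_on {a..1} limit_solution"
proof (rule continuous_on_eq)
  show "continuous_on {a..1} (\<lambda>x. integral {x..1} (\<lambda>s. q s / limit_solution s) - tail_integral x)"
    using a by (intro continuous_intros indefinite_integral_continuous_1'
        q_div_limit_solution_integrable continuous_on_subset[OF tail_integral_continuous]) auto
qed (use a limit_solution_eq in auto)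

lemma limit_solution_has_derivative:
  assumes s: "s \<in> {0<..<1}"
  shows "(limit_solution has_real_derivative c - h s - q s / limit_solution s) (at s)"
proof -
  define a where "a = s / 2"
  define b where "b = (1 + s) / 2"
  have ab: "0 < a" "a < s" "s < b" "b < 1" using s by (auto simp: a_def b_def)
  define g where "g s = q s / limit_solution s" for s
  have "limit_solution x \<noteq> 0" if "x \<in> {a..b}" for x
    using limit_solution_pos[of x] that ab by auto
  then have "continuous_on {a..b} g" unfolding g_def
    using ab by (intro continuous_on_divide continuous_on_subset[OF q_continuous]
        continuous_on_subset[OF limit_solution_continuous[of a]]) auto
  then have "((\<lambda>x. integral {x..b} g) has_real_derivative - g s) (at s)"
    using integral_has_real_derivative'[of a b g s] ab by (simp add: at_within_Icc_at)
  moreover have "(tail_integral has_real_derivative - (c - h s)) (at s)"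
    using integral_has_real_derivative'[of 0 1 "\<lambda>s. c - h s" s] s h_continuous
    unfolding tail_integral_def[abs_def]
    by (simp add: at_within_Icc_at continuous_on_diff)
  ultimately have deriv: "((\<lambda>x. integral {x..b} g + integral {b..1} g - tail_integral x)
      has_real_derivative c - h s - q s / limit_solution s) (at s)"
    by (auto intro!: derivative_eq_intros simp: g_def)
  have eq: "integral {x..b} g + integral {b..1} g - tail_integral x = limit_solution x"
    if "x \<in> {a<..<b}" for x
  proof -
    have "g integrable_on {x..1}"
      unfolding g_def[abs_def] using that ab by (intro q_div_limit_solution_integrable) auto
    then have "integral {x..b} g + integral {b..1} g = integral {x..1} g"
      using that ab by (intro Henstock_Kurzweil_Integration.integral_combine) auto
    then show ?thesis using limit_solution_eq[of x] that ab by (simp add: g_def[abs_def])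
  qed
  show ?thesis
    by (rule has_field_derivative_transform_within_open[OF deriv open_greaterThanLessThan _ eq])
      (use ab in auto)
qed

lemma limit_solution_tendsto_at_left_1: "(limit_solution \<longlongrightarrow> 0) (at_left 1)"
  using continuous_on_Icc_at_leftD[OF limit_solution_continuous[of "1/2"]] limit_solution_at_1 by simp

end

section \<open>Behaviour at \<open>0\<close> under the speed condition\<close>

locale riccati_large_speed = riccati +
  fixes f :: "real \<Rightarrow> real"
  assumes f_has_derivative: "\<And>x. x \<in> {0..1} \<Longrightarrow> (f has_real_derivative h x) (at x within {0..1})"
    and f_0: "f 0 = 0"
    and q_limsup: "Limsup (at_right 0) (\<lambda>x. ereal (q x / x)) < \<infinity>"
    and speed: "c > (SUP x\<in>{0<..1}. f x / x) + 2 * sqrt (SUP x\<in>{0<..1}. q x / x)"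
begin

definition A :: real where "A = (SUP x\<in>{0<..1}. f x / x)"
definition B :: real where "B = (SUP x\<in>{0<..1}. q x / x)"
definition k :: real where "k = c - A"
definition F :: "real \<Rightarrow> real" where "F x = c * x - f x"

lemma f_continuous: "continuous_on {0..1} f"
  by (rule DERIV_continuous_on[OF f_has_derivative])

lemma f_div_bdd_above: "bdd_above ((\<lambda>x. f x / x) ` {0<..1})"
proof -
  obtain M where M: "\<And>x. x \<in> {0..1} \<Longrightarrow> \<bar>h x\<bar> \<le> M"
    using bounded_on_unit_interval[OF h_continuous] by blast
  have "f x / x \<le> M" if x: "x \<in> {0<..1}" for x
  proof -
    have "f x \<le> f 0 + M * (x - 0)"
    proof (rule increment_le_of_deriv_le)
      show "(f has_real_derivative h t) (at t)" if "t \<in> {0<..<x}" for t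
        using f_has_derivative[of t] that x by (auto simp: at_within_Icc_at)
      show "h t \<le> M" if "t \<in> {0<..<x}" for t using M[of t] that x by auto
    qed (use x in \<open>auto intro: continuous_on_subset[OF f_continuous]\<close>)
    then show ?thesis using x f_0 by (simp add: field_simps)
  qed
  then show ?thesis by (rule bdd_aboveI2)
qed

lemma q_div_bdd_above: "bdd_above ((\<lambda>x. q x / x) ` {0<..1})"
proof -
  obtain Q where Q: "\<And>x. x \<in> {0..1} \<Longrightarrow> \<bar>q x\<bar> \<le> Q"
    using bounded_on_unit_interval[OF q_continuous] by blast
  obtain n :: nat where "Limsup (at_right 0) (\<lambda>x. ereal (q x / x)) < ereal (real n)"
    using q_limsup less_PInf_Ex_of_nat by auto
  then have "eventually (\<lambda>x. q x / x < real n) (at_right 0)"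
    by (auto dest: Limsup_lessD)
  then obtain d where d: "d > 0" "\<And>x. 0 < x \<Longrightarrow> x < d \<Longrightarrow> q x / x < real n"
    unfolding eventually_at_right_field by auto
  have "q x / x \<le> max (real n) (Q / min d 1)" if x: "x \<in> {0<..1}" for x
  proof (cases "x < d")
    case False
    then have "q x / x \<le> Q / min d 1"
      using Q[of x] x d(1) q_nonneg[of x] by (intro frac_le) auto
    then show ?thesis by simp
  qed (use d(2)[of x] x in auto)
  then show ?thesis by (rule bdd_aboveI2)
qed

lemma f_le: "x \<in> {0<..1} \<Longrightarrow> f x \<le> A * x"
  using cSUP_upper[OF _ f_div_bdd_above, of x] by (simp add: A_def field_simps)

lemma q_le: "x \<in> {0<..1} \<Longrightarrow> q x \<le> B * x"
  using cSUP_upper[OF _ q_div_bdd_above, of x] by (simp add: B_def field_simps)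

lemma B_pos: "B > 0"
  using q_le[of "1/2"] q_pos[of "1/2"] by simp

lemma k_pos: "k > 0" and four_B_less_k_square: "4 * B < k * k"
proof -
  have gt: "2 * sqrt B < k" using speed unfolding k_def A_def B_def by simp
  show pos: "k > 0" by (rule le_less_trans[OF _ gt]) (use B_pos in simp)
  have "(2 * sqrt B) * (2 * sqrt B) < k * k"
    using gt B_pos pos by (intro mult_strict_mono) auto
  then show "4 * B < k * k" using B_pos by simp
qed

lemma F_continuous: "continuous_on {0..1} F"
  unfolding F_def[abs_def] by (intro continuous_intros f_continuous)

lemma F_tendsto_0: "(F \<longlongrightarrow> 0) (at_right 0)"
  using continuous_on_Icc_at_rightD[OF F_continuous] by (simp add: F_def f_0)

lemma k_mult_le_F: "x \<in> {0<..1} \<Longrightarrow> k * x \<le> F x"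
  using f_le[of x] by (simp add: F_def k_def algebra_simps)

lemma tail_integral_eq: "\<phi> \<in> {0..1} \<Longrightarrow> tail_integral \<phi> = F 1 - F \<phi>"
  unfolding tail_integral_def
proof (intro integral_unique fundamental_theorem_of_calculus)
  fix x assume "\<phi> \<in> {0..1}" "x \<in> {\<phi>..1}"
  then have "(F has_real_derivative c * 1 - h x) (at x within {0..1})"
    unfolding F_def[abs_def] by (intro derivative_intros f_has_derivative) auto
  then show "(F has_vector_derivative c - h x) (at x within {\<phi>..1})"
    using \<open>\<phi> \<in> {0..1}\<close> by (auto simp: has_real_derivative_iff_has_vector_derivative[symmetric]
        intro: DERIV_subset)
qed auto

text \<open>\<open>H' = - q / limit_solution \<le> 0\<close>, so \<open>H\<close> is nonincreasing.\<close>
definition H :: "real \<Rightarrow> real" where "H x = limit_solution x - F x"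

lemma H_eq: "\<phi> \<in> {0<..1} \<Longrightarrow> H \<phi> = integral {\<phi>..1} (\<lambda>s. q s / limit_solution s) - F 1"
  using limit_solution_eq[of \<phi>] tail_integral_eq[of \<phi>] by (auto simp: H_def)

lemma H_diff:
  assumes "t \<in> {0<..1}" "t \<le> \<phi>" "\<phi> \<le> 1"
  shows "H t = H \<phi> + integral {t..\<phi>} (\<lambda>s. q s / limit_solution s)"
proof -
  have "integral {t..\<phi>} (\<lambda>s. q s / limit_solution s) + integral {\<phi>..1} (\<lambda>s. q s / limit_solution s)
      = integral {t..1} (\<lambda>s. q s / limit_solution s)"
    using assms q_div_limit_solution_integrable[OF assms(1)]
    by (intro Henstock_Kurzweil_Integration.integral_combine) auto
  then show ?thesis using H_eq[of t] H_eq[of \<phi>] assms by auto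
qed

lemma H_antimono:
  assumes "t \<in> {0<..1}" "t \<le> \<phi>" "\<phi> \<le> 1"
  shows "H \<phi> \<le> H t"
proof -
  have "0 \<le> integral {t..\<phi>} (\<lambda>s. q s / limit_solution s)"
    using assms q_nonneg limit_solution_nonneg
    by (intro Henstock_Kurzweil_Integration.integral_nonneg
        integrable_on_subinterval[OF q_div_limit_solution_integrable[OF assms(1)]]) auto
  then show ?thesis using H_diff[OF assms] by simp
qed

lemma H_lower_bound:
  assumes above: "\<And>r. r \<in> {0<..<p} \<Longrightarrow> k / 2 * r < limit_solution r"
    and "p \<le> 1" and s: "s \<in> {0<..<p}"
  shows "- (2 * B / k) * s \<le> H s"
proof -
  have lim: "((\<lambda>t. - F t - (s - t) * (2 * B / k)) \<longlongrightarrow> - 0 - (s - 0) * (2 * B / k)) (at_right 0)"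
    by (intro tendsto_intros F_tendsto_0)
  have "- F t - (s - t) * (2 * B / k) \<le> H s" if t: "0 < t" "t < s" for t
  proof -
    have "integral {t..s} (\<lambda>r. q r / limit_solution r) \<le> integral {t..s} (\<lambda>r. 2 * B / k)"
    proof (rule integral_le)
      show "(\<lambda>r. q r / limit_solution r) integrable_on {t..s}"
        using t s assms(2) by (intro integrable_on_subinterval[OF q_div_limit_solution_integrable]) auto
      show "q r / limit_solution r \<le> 2 * B / k" if r: "r \<in> {t..s}" for r
      proof -
        have "q r / limit_solution r \<le> (B * r) / (k / 2 * r)"
          using q_le[of r] above[of r] q_nonneg[of r] k_pos B_pos r t s assms(2)
          by (intro frac_le) auto
        also have "\<dots> = 2 * B / k" using r t by simp
        finally show ?thesis .
      qed
    qed (rule integrable_const_ivl)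
    also have "\<dots> = (s - t) * (2 * B / k)" using t by simp
    finally have "H t \<le> H s + (s - t) * (2 * B / k)"
      using H_diff[of t s] t s assms(2) by simp
    moreover have "0 < k / 2 * t" using k_pos t by simp
    then have "- F t < H t" using above[of t] t s by (simp add: H_def)
    ultimately show ?thesis by simp
  qed
  then have "\<forall>\<^sub>F t in at_right 0. - F t - (s - t) * (2 * B / k) \<le> H s"
    using s unfolding eventually_at_right_field by (intro exI[of _ s]) auto
  from tendsto_upperbound[OF lim this] show ?thesis by (simp add: mult.commute)
qed

lemma limit_solution_above_steeper_line:
  assumes above: "\<And>r. r \<in> {0<..<p} \<Longrightarrow> k / 2 * r < limit_solution r"
    and p: "0 < p" "p \<le> 1"
  shows "(k - 2 * B / k) * p \<le> limit_solution p"
proof -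
  have "continuous_on {p/2..p} (\<lambda>r. limit_solution r - (k - 2 * B / k) * r)"
    using p by (intro continuous_intros continuous_on_subset[OF limit_solution_continuous[of "p/2"]]) auto
  then have "((\<lambda>r. limit_solution r - (k - 2 * B / k) * r) \<longlongrightarrow>
      limit_solution p - (k - 2 * B / k) * p) (at_left p)"
    by (rule continuous_on_Icc_at_leftD) (use p in auto)
  moreover have "(k - 2 * B / k) * r \<le> limit_solution r" if "r \<in> {0<..<p}" for r
    using H_lower_bound[OF above p(2) that] k_mult_le_F[of r] that p(2)
    by (simp add: H_def algebra_simps)
  then have "\<forall>\<^sub>F r in at_left p. 0 \<le> limit_solution r - (k - 2 * B / k) * r"
    unfolding eventually_at_left_field using p(1) by (intro exI[of _ 0]) auto
  ultimately have "0 \<le> limit_solution p - (k - 2 * B / k) * p"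
    by (rule tendsto_lowerbound) simp
  then show ?thesis by simp
qed

text \<open>Otherwise \<open>y > k x / 2\<close> near \<open>0\<close> would propagate to \<open>y \<ge> (k - 2 B / k) x\<close>, which is
  steeper since \<open>k\<^sup>2 > 4 B\<close>.\<close>
lemma limit_solution_frequently_below_line:
  "\<exists>\<^sub>F x in at_right 0. limit_solution x \<le> k / 2 * x"
proof (rule ccontr)
  assume "\<not> ?thesis"
  then have "\<forall>\<^sub>F x in at_right 0. k / 2 * x < limit_solution x"
    by (simp add: not_frequently not_le)
  then obtain d0 where d0: "0 < d0" "\<And>x. 0 < x \<Longrightarrow> x < d0 \<Longrightarrow> k / 2 * x < limit_solution x"
    unfolding eventually_at_right_field by auto
  define d where "d = min d0 1"
  have d: "0 < d" "d \<le> 1" "\<And>x. 0 < x \<Longrightarrow> x < d \<Longrightarrow> k / 2 * x < limit_solution x"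
    using d0 by (auto simp: d_def)
  define E where "E = {d/2..1} \<inter> (\<lambda>x. limit_solution x - k / 2 * x) -` {..0}"
  have "closed E" unfolding E_def
    using limit_solution_continuous[of "d/2"] d
    by (intro continuous_closed_preimage) (auto intro!: continuous_intros)
  moreover have "1 \<in> E" using limit_solution_at_1 k_pos d by (auto simp: E_def)
  moreover have "bdd_below E" unfolding E_def by (auto intro: bdd_belowI[of _ "d/2"])
  ultimately have "Inf E \<in> E" by (intro closed_contains_Inf) auto
  define p where "p = Inf E"
  have p: "d/2 \<le> p" "p \<le> 1" "limit_solution p \<le> k / 2 * p"
    using \<open>Inf E \<in> E\<close> by (auto simp: E_def p_def)
  have above: "k / 2 * r < limit_solution r" if r: "r \<in> {0<..<p}" for r
  proof (cases "r < d")
    case False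
    show ?thesis
    proof (rule ccontr)
      assume "\<not> ?thesis"
      then have "r \<in> E" using False r p d by (auto simp: E_def)
      then have "p \<le> r" unfolding p_def by (rule cInf_lower[OF _ \<open>bdd_below E\<close>])
      then show False using r by simp
    qed
  qed (use d(3) r in auto)
  have "0 < p" using p d by simp
  then have "k / 2 * p < (k - 2 * B / k) * p"
    using four_B_less_k_square k_pos by (intro mult_strict_right_mono) (auto simp: field_simps)
  then show False
    using limit_solution_above_steeper_line[OF above \<open>0 < p\<close> p(2)] p(3) by linarith
qed

lemma limit_solution_le_F:
  assumes t: "t \<in> {0<..1}"
  shows "limit_solution t \<le> F t"
proof (rule ccontr)
  assume "\<not> ?thesis"
  then have "0 < H t" by (simp add: H_def)
  have "((\<lambda>x. k / 2 * x - F x) \<longlongrightarrow> k / 2 * 0 - 0) (at_right 0)"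
    by (intro tendsto_intros F_tendsto_0)
  then have "\<forall>\<^sub>F x in at_right 0. k / 2 * x - F x < H t"
    using \<open>0 < H t\<close> by (auto dest: order_tendstoD(2))
  moreover have "\<forall>\<^sub>F x in at_right 0. 0 < x \<and> x < t"
    using t by (auto simp: eventually_at_right_field intro: exI[of _ t])
  ultimately have "\<forall>\<^sub>F x in at_right 0. k / 2 * x - F x < H t \<and> 0 < x \<and> x < t"
    by (rule eventually_conj)
  then obtain x where x: "k / 2 * x - F x < H t" "0 < x" "x < t" "limit_solution x \<le> k / 2 * x"
    using frequently_eventually_conj[OF limit_solution_frequently_below_line] by (auto dest: frequently_ex)
  have "H t \<le> H x" using t x by (intro H_antimono) auto
  then show False using x by (simp add: H_def)
qed

lemma limit_solution_tendsto_0: "(limit_solution \<longlongrightarrow> 0) (at_right 0)"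
proof (rule tendsto_sandwich[OF _ _ tendsto_const F_tendsto_0])
  show "\<forall>\<^sub>F x in at_right 0. 0 \<le> limit_solution x"
    "\<forall>\<^sub>F x in at_right 0. limit_solution x \<le> F x"
    unfolding eventually_at_right_field
    by (auto intro!: exI[of _ 1] limit_solution_nonneg limit_solution_le_F)
qed

end

lemma negated_solution:
  fixes y h q :: "real \<Rightarrow> real"
  assumes h: "continuous_on {0..1} h" and q: "continuous_on {0..1} q"
    and y': "\<And>s. s \<in> {0<..<1} \<Longrightarrow> (y has_real_derivative c - h s - q s / y s) (at s)"
    and y_pos: "\<And>s. s \<in> {0<..<1} \<Longrightarrow> 0 < y s"
    and "(y \<longlongrightarrow> 0) (at_right 0)" and "(y \<longlongrightarrow> 0) (at_left 1)"
  defines "z \<equiv> \<lambda>x. if x \<in> {0<..<1} then - y x else 0"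
  shows "continuous_on {0..1} z \<and> continuous_on {0<..<1} (\<lambda>x. h x - c - q x / z x) \<and>
    (\<forall>x\<in>{0<..<1}. (z has_real_derivative h x - c - q x / z x) (at x)) \<and>
    (\<forall>x\<in>{0<..<1}. z x < 0) \<and> z 0 = 0 \<and> z 1 = 0"
proof (intro conjI ballI)
  have z': "(z has_real_derivative h x - c - q x / z x) (at x)" if x: "x \<in> {0<..<1}" for x
  proof (rule has_field_derivative_transform_within_open[OF _ open_greaterThanLessThan x])
    have "h x - c - q x / z x = - (c - h x - q x / y x)" using x by (simp add: z_def)
    then show "((\<lambda>x. - y x) has_real_derivative h x - c - q x / z x) (at x)"
      by (simp only: DERIV_minus[OF y'[OF x]])
  qed (simp add: z_def)
  show "(z has_real_derivative h x - c - q x / z x) (at x)" if "x \<in> {0<..<1}" for x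
    by (rule z'[OF that])
  show "z x < 0" if "x \<in> {0<..<1}" for x using y_pos[OF that] that by (simp add: z_def)
  show "continuous_on {0..1} z"
  proof (rule continuous_on_IccI)
    have "\<forall>\<^sub>F x in at_right 0. - y x = z x"
      unfolding eventually_at_right_field by (intro exI[of _ 1]) (auto simp: z_def)
    then have "(z \<longlongrightarrow> - 0) (at_right 0)"
      using tendsto_minus[OF assms(5)] by (simp only: tendsto_cong)
    then show "(z \<longlongrightarrow> z 0) (at_right 0)" by (simp add: z_def)
    have "\<forall>\<^sub>F x in at_left 1. - y x = z x"
      unfolding eventually_at_left_field by (intro exI[of _ 0]) (auto simp: z_def)
    then have "(z \<longlongrightarrow> - 0) (at_left 1)"
      using tendsto_minus[OF assms(6)] by (simp only: tendsto_cong)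
    then show "(z \<longlongrightarrow> z 1) (at_left 1)" by (simp add: z_def)
    show "(z \<longlongrightarrow> z x) (at x)" if "0 < x" "x < 1" for x
      using DERIV_isCont[OF z'] that unfolding isCont_def by simp
  qed simp
  then have "continuous_on {0<..<1} z" by (rule continuous_on_subset) auto
  moreover have "z x \<noteq> 0" if "x \<in> {0<..<1}" for x using y_pos[OF that] that by (simp add: z_def)
  ultimately show "continuous_on {0<..<1} (\<lambda>x. h x - c - q x / z x)"
    using continuous_on_subset[OF h, of "{0<..<1}"] continuous_on_subset[OF q, of "{0<..<1}"]
    by (intro continuous_intros) (auto simp: subset_iff)
qed (simp_all add: z_def)

theorem lemma4p1:
  fixes f h q :: "real \<Rightarrow> real" and c :: real
  assumes f_deriv: "\<And>x. x \<in> {0..1} \<Longrightarrow> (f has_real_derivative h x) (at x within {0..1})"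
    and h_cont: "continuous_on {0..1} h"
    and f0: "f 0 = 0"
    and q: "cond_q q"
    and c: "c > (SUP x\<in>{0<..1}. f x / x) + 2 * sqrt (SUP x\<in>{0<..1}. q x / x)"
  shows "\<exists>z z' :: real \<Rightarrow> real.
           continuous_on {0..1} z \<and> continuous_on {0<..<1} z' \<and>
           (\<forall>x\<in>{0<..<1}. (z has_real_derivative z' x) (at x)) \<and>
           (\<forall>x\<in>{0<..<1}. z' x = h x - c - q x / z x) \<and>
           (\<forall>x\<in>{0<..<1}. z x < 0) \<and> z 0 = 0 \<and> z 1 = 0"
proof -
  interpret riccati_large_speed h q c f
    using assms unfolding cond_q_def by unfold_locales auto
  show ?thesis
    using negated_solution[OF h_continuous q_continuous limit_solution_has_derivative
        limit_solution_pos limit_solution_tendsto_0 limit_solution_tendsto_at_left_1]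
    by blast
qed

end
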